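(* There is an absolute constant $c>0$ such that the following holds. Let $q,p$ be positive integers with $q/2<p<2q$, let $W\subseteq\{0,1,\dots,q-1\}$, and let $b_1,b_2$ be integers with $\gcd(b_1,q)=\gcd(b_2,p)=1$. Then $$\sum_{a\in\mathbb{Z},\ |a|<q/2}\left|f_W\left(\frac{b_1a}{q}\right)\right|\,\left|f_W\left(\frac{b_2a}{p}\right)\right|\ \le\ c\, q|W|.$$
   Context: $e(u)=\exp(2\pi i u)$ and, for a finite set of integers $W$, $f_W(t)=\sum_{s\in W}e(st)$. *)

theory Defs
  imports "HOL-Analysis.Analysis"
begin

definition e :: "real \<Rightarrow> complex" where
  "e u = exp (2 * of_real pi * \<i> * of_real u)"

definition fW :: "int set \<Rightarrow> real \<Rightarrow> complex" where
  "fW W t = (\<Sum>s\<in>W. e (of_int s * t))"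

end

theory Submission
  imports Defs
begin

(* By AM-GM it suffices to bound the sums of |f_W(b_1 a/q)|^2 and of |f_W(b_2 a/p)|^2 over
   |a| < q/2.  Since f_W has period 1 and b is invertible modulo n, as a runs through n
   consecutive integers the points b a/n run through all fractions r/n modulo 1, and by
   orthogonality of the n-th roots of unity the sum of |f_W(r/n)|^2 over r < n is n times the
   number of pairs in W x W that are congruent modulo n; this is at most k n |W| when W lies
   in [0, k n).  The range |a| < q/2 is one block of q consecutive integers and lies in two
   blocks of p consecutive integers, which gives the bounds q |W| and 4 p |W| < 8 q |W|. *)

lemma e_add: "e (u + v) = e u * e v"
  unfolding e_def by (simp add: distrib_left distrib_right exp_add)

lemma e_of_int [simp]: "e (of_int k) = 1"
  unfolding e_def by (simp add: mult_ac)

lemma e_eq_1_iff: "e u = 1 \<longleftrightarrow> u \<in> \<int>"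
proof
  assume "e u = 1"
  then have "exp (complex_of_real (2 * pi * u) * \<i>) = 1"
    unfolding e_def by (simp add: mult_ac)
  then obtain n :: int where "2 * pi * u = of_int (2 * n) * pi"
    unfolding exp_eq_1 by auto
  then show "u \<in> \<int>" by simp
qed (auto elim: Ints_cases)

lemma e_power: "e u ^ n = e (of_nat n * u)"
  unfolding e_def by (simp add: exp_of_nat_mult[symmetric] mult_ac)

lemma cnj_e: "cnj (e u) = e (- u)"
  unfolding e_def by (simp add: exp_cnj)

lemma fW_add_of_int: "fW W (t + of_int k) = fW W t"
  unfolding fW_def by (simp add: distrib_left e_add flip: of_int_mult)

lemma sum_e_roots_of_unity:
  fixes d :: int and n :: nat
  assumes "n > 0"
  shows "(\<Sum>r<n. e (of_int d * of_nat r / of_nat n)) = (if int n dvd d then of_nat n else 0)"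
proof -
  let ?z = "e (of_int d / of_nat n)"
  have powers: "e (of_int d * of_nat r / of_nat n) = ?z ^ r" for r
    by (simp add: e_power mult_ac)
  have "?z ^ n = 1"
    using assms by (simp add: e_power)
  moreover have "?z = 1 \<longleftrightarrow> int n dvd d"
    using assms of_int_div_of_int_in_Ints_iff[of d "int n"] by (simp add: e_eq_1_iff)
  ultimately show ?thesis
    unfolding powers sum_gp_strict by auto
qed

lemma sum_norm_fW_squared_eq_card_congruent_pairs:
  fixes n :: nat
  assumes "finite W" "n > 0"
  shows "(\<Sum>r<n. (cmod (fW W (real r / real n)))\<^sup>2)
    = real n * real (card {(s, s') \<in> W \<times> W. int n dvd s - s'})"
proof -
  let ?C = "{(s, s') \<in> W \<times> W. int n dvd s - s'}"
  have "complex_of_real (\<Sum>r<n. (cmod (fW W (real r / real n)))\<^sup>2)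
      = (\<Sum>r<n. fW W (real r / real n) * cnj (fW W (real r / real n)))"
    by (simp only: of_real_sum complex_norm_square)
  also have "\<dots> = (\<Sum>r<n. \<Sum>s\<in>W. \<Sum>s'\<in>W. e (of_int (s - s') * of_nat r / of_nat n))"
    unfolding fW_def
    by (simp add: sum_distrib_left sum_distrib_right cnj_e algebra_simps diff_divide_distrib
        flip: e_add) (rule sum.cong[OF refl], rule sum.swap)
  also have "\<dots> = (\<Sum>s\<in>W. \<Sum>s'\<in>W. \<Sum>r<n. e (of_int (s - s') * of_nat r / of_nat n))"
    by (subst sum.swap) (simp add: sum.swap[of _ "{..<n}"])
  also have "\<dots> = (\<Sum>(s, s')\<in>W \<times> W. if int n dvd s - s' then of_nat n else 0)"
    by (simp only: sum_e_roots_of_unity[OF assms(2)] sum.cartesian_product)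
  also have "\<dots> = of_nat n * of_nat (card ?C)"
  proof -
    have "(\<Sum>(s, s')\<in>W \<times> W. if int n dvd s - s' then of_nat n else 0)
        = (\<Sum>x\<in>W \<times> W. if x \<in> ?C then of_nat n else (0::complex))"
      by (rule sum.cong) (auto split: if_splits)
    also have "\<dots> = of_nat n * of_nat (card ?C)"
      using assms(1) by (simp add: sum.If_cases Int_absorb1 subset_iff)
    finally show ?thesis .
  qed
  also have "\<dots> = complex_of_real (real n * real (card ?C))"
    by simp
  finally show ?thesis
    by (simp only: of_real_eq_iff)
qed

lemma sum_periodic_over_residue_window:
  fixes g :: "real \<Rightarrow> 'a::comm_monoid_add" and n :: nat and b lo :: int
  assumes "n > 0" "coprime b (int n)" and periodic: "\<And>t k. g (t + of_int k) = g t"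
  shows "(\<Sum>a\<in>{lo..<lo + int n}. g (of_int (b * a) / real n)) = (\<Sum>r<n. g (real r / real n))"
proof -
  define h where "h a = nat ((b * a) mod int n)" for a
  have residue: "g (of_int (b * a) / real n) = g (real (h a) / real n)" for a
  proof -
    have "real_of_int (b * a) = of_int (int n * ((b * a) div int n) + (b * a) mod int n)"
      by simp
    then have "real_of_int (b * a) = real n * of_int ((b * a) div int n) + of_int ((b * a) mod int n)"
      by (simp only: of_int_add of_int_mult of_int_of_nat_eq)
    then have "of_int (b * a) / real n = real (h a) / real n + of_int ((b * a) div int n)"
      using assms(1) by (simp add: h_def field_simps)
    then show ?thesis
      using periodic by simp
  qed
  have "inj_on h {lo..<lo + int n}"
  proof (rule inj_onI)
    fix a a'
    assume a: "a \<in> {lo..<lo + int n}" and a': "a' \<in> {lo..<lo + int n}" and "h a = h a'"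
    then have "(b * a) mod int n = (b * a') mod int n"
      using assms(1) by (simp add: h_def eq_nat_nat_iff)
    then have "int n dvd b * (a - a')"
      by (simp add: mod_eq_dvd_iff right_diff_distrib)
    then have "int n dvd a - a'"
      using assms(2) by (simp add: coprime_dvd_mult_right_iff coprime_commute)
    moreover have "\<bar>a - a'\<bar> < int n"
      using a a' by auto
    ultimately show "a = a'"
      using dvd_imp_le_int[of "a - a'" "int n"] by auto
  qed
  moreover have "h ` {lo..<lo + int n} = {..<n}"
  proof (rule card_subset_eq)
    show "h ` {lo..<lo + int n} \<subseteq> {..<n}"
      using assms(1) by (auto simp: h_def nat_less_iff)
    show "card (h ` {lo..<lo + int n}) = card {..<n}"
      using card_image[OF \<open>inj_on h _\<close>] by simp
  qed simp
  ultimately have "bij_betw h {lo..<lo + int n} {..<n}"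
    by (rule bij_betw_imageI)
  then show ?thesis
    unfolding residue by (rule sum.reindex_bij_betw)
qed

lemma sum_periodic_over_residue_windows:
  fixes g :: "real \<Rightarrow> 'a::semiring_1" and n j :: nat and b lo :: int
  assumes "n > 0" "coprime b (int n)" and periodic: "\<And>t k. g (t + of_int k) = g t"
  shows "(\<Sum>a\<in>{lo..<lo + int (j * n)}. g (of_int (b * a) / real n))
    = of_nat j * (\<Sum>r<n. g (real r / real n))"
proof (induction j arbitrary: lo)
  case 0
  then show ?case by simp
next
  case (Suc j)
  have "{lo..<lo + int (Suc j * n)}
      = {lo..<lo + int n} \<union> {lo + int n..<(lo + int n) + int (j * n)}"
    by (auto simp del: of_nat_mult)
  then have "(\<Sum>a\<in>{lo..<lo + int (Suc j * n)}. g (of_int (b * a) / real n))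
      = (\<Sum>a\<in>{lo..<lo + int n}. g (of_int (b * a) / real n))
        + (\<Sum>a\<in>{lo + int n..<(lo + int n) + int (j * n)}. g (of_int (b * a) / real n))"
    by (simp add: sum.union_disjoint)
  also have "\<dots> = of_nat (Suc j) * (\<Sum>r<n. g (real r / real n))"
    by (simp only: sum_periodic_over_residue_window[OF assms] Suc.IH) (simp add: algebra_simps)
  finally show ?case .
qed

lemma card_congruent_pairs_le:
  fixes W :: "int set" and n k :: nat
  assumes "W \<subseteq> {0..<int (k * n)}"
  shows "card {(s, s') \<in> W \<times> W. int n dvd s - s'} \<le> k * card W"
proof (cases "n = 0")
  case True
  then show ?thesis using assms by simp
next
  case False
  let ?C = "{(s, s') \<in> W \<times> W. int n dvd s - s'}"
  define f where "f = (\<lambda>(s :: int, s' :: int). (s, nat (s' div int n)))"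
  have "inj_on f ?C"
  proof (rule inj_onI)
    fix x y assume "x \<in> ?C" "y \<in> ?C" "f x = f y"
    moreover obtain s s1 t s2 where "x = (s, s1)" "y = (t, s2)"
      by fastforce
    ultimately have C1: "(s, s1) \<in> ?C" and C2: "(t, s2) \<in> ?C" and "f (s, s1) = f (t, s2)"
      by simp_all
    have "0 \<le> s1" "0 \<le> s2"
      using C1 C2 assms by auto
    with \<open>f (s, s1) = f (t, s2)\<close> have "s = t" "s1 div int n = s2 div int n"
      using False by (simp_all add: f_def eq_nat_nat_iff pos_imp_zdiv_nonneg_iff)
    moreover have "s1 mod int n = s mod int n" "s2 mod int n = t mod int n"
      using C1 C2 by (simp_all add: mod_eq_dvd_iff dvd_diff_commute)
    ultimately show "x = y"
      using \<open>x = (s, s1)\<close> \<open>y = (t, s2)\<close> by (metis div_mod_decomp_int)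
  qed
  moreover have "nat (s' div int n) < k" if "s' \<in> W" for s'
  proof -
    have "0 \<le> s'" "nat s' < k * n"
      using that assms by (auto simp: nat_less_iff)
    then show ?thesis
      by (simp add: nat_div_distrib less_mult_imp_div_less)
  qed
  then have "f ` ?C \<subseteq> W \<times> {..<k}"
    by (auto simp: f_def)
  ultimately have "card ?C \<le> card (W \<times> {..<k})"
    using assms by (intro card_inj_on_le) (auto intro: finite_subset)
  then show ?thesis
    by (simp add: card_cartesian_product mult.commute)
qed

lemma sum_norm_fW_squared_window_le:
  fixes W B :: "int set" and n k j :: nat and b lo :: int
  assumes "n > 0" "coprime b (int n)"
    and "W \<subseteq> {0..<int (k * n)}" "B \<subseteq> {lo..<lo + int (j * n)}"
  shows "(\<Sum>a\<in>B. (cmod (fW W (of_int (b * a) / real n)))\<^sup>2) \<le> real (j * k * n * card W)"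
proof -
  let ?g = "\<lambda>t. (cmod (fW W t))\<^sup>2"
  let ?C = "{(s, s') \<in> W \<times> W. int n dvd s - s'}"
  have "finite W"
    using assms(3) finite_subset by blast
  have "(\<Sum>a\<in>B. ?g (of_int (b * a) / real n))
      \<le> (\<Sum>a\<in>{lo..<lo + int (j * n)}. ?g (of_int (b * a) / real n))"
    using assms(4) by (intro sum_mono2) auto
  also have "\<dots> = real j * (\<Sum>r<n. ?g (real r / real n))"
    using sum_periodic_over_residue_windows[OF assms(1,2), where g = ?g] by (simp add: fW_add_of_int)
  also have "\<dots> = real j * real n * real (card ?C)"
    using sum_norm_fW_squared_eq_card_congruent_pairs[OF \<open>finite W\<close> assms(1)] by simp
  also have "\<dots> \<le> real j * real n * real (k * card W)"
    using card_congruent_pairs_le[OF assms(3)] by (intro mult_left_mono) (simp_all flip: of_nat_mult)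
  finally show ?thesis
    by (simp add: mult_ac)
qed

lemma sum_mult_le_sum_squares:
  fixes x y :: "'a \<Rightarrow> real"
  shows "2 * (\<Sum>i\<in>A. x i * y i) \<le> (\<Sum>i\<in>A. (x i)\<^sup>2) + (\<Sum>i\<in>A. (y i)\<^sup>2)"
proof -
  have "2 * (x i * y i) \<le> (x i)\<^sup>2 + (y i)\<^sup>2" for i
    using zero_le_power2[of "x i - y i"] by (simp add: power2_eq_square algebra_simps)
  then have "(\<Sum>i\<in>A. 2 * (x i * y i)) \<le> (\<Sum>i\<in>A. (x i)\<^sup>2 + (y i)\<^sup>2)"
    by (rule sum_mono)
  then show ?thesis
    by (simp only: sum_distrib_left[symmetric] sum.distrib)
qed

lemma centered_range_subset_window:
  fixes q :: int
  shows "{a::int. \<bar>real_of_int a\<bar> < real_of_int q / 2} \<subseteq> {- (q div 2)..<- (q div 2) + q}"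
proof
  fix a assume "a \<in> {a::int. \<bar>real_of_int a\<bar> < real_of_int q / 2}"
  then have "real_of_int (2 * \<bar>a\<bar>) < real_of_int q"
    by simp
  then have "2 * \<bar>a\<bar> < q"
    by (simp only: of_int_less_iff)
  moreover have "q = 2 * (q div 2) + q mod 2" "0 \<le> q mod 2" "q mod 2 < 2"
    by simp_all
  ultimately show "a \<in> {- (q div 2)..<- (q div 2) + q}"
    by (simp add: abs_less_iff) linarith
qed

lemma sum_norm_fW_squared_centered_le:
  fixes q n b :: int and j k :: nat
  assumes "n > 0" "coprime b n" "W \<subseteq> {0..<int k * n}" "q \<le> int j * n"
  shows "(\<Sum>a\<in>{a::int. \<bar>real_of_int a\<bar> < real_of_int q / 2}.
      (cmod (fW W (of_int (b * a) / of_int n)))\<^sup>2)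
    \<le> real j * real k * of_int n * real (card W)"
proof -
  obtain n' where n': "n = int n'" "n' > 0"
    using assms(1) by (metis pos_int_cases of_nat_0_less_iff)
  have "{a::int. \<bar>real_of_int a\<bar> < real_of_int q / 2}
      \<subseteq> {- (q div 2)..<- (q div 2) + int (j * n')}"
    using centered_range_subset_window[of q] assms(4) n' by auto
  from sum_norm_fW_squared_window_le[OF \<open>n' > 0\<close> _ _ this] show ?thesis
    using assms(2,3) n' by simp
qed

theorem corollary2:
  "\<exists>c::real. c > 0 \<and>
    (\<forall>(q::int) (p::int) (W::int set) (b1::int) (b2::int).
       q > 0 \<longrightarrow> p > 0 \<longrightarrow> real_of_int q / 2 < real_of_int p \<longrightarrow> p < 2 * q \<longrightarrow>
       W \<subseteq> {0..q-1} \<longrightarrow> gcd b1 q = 1 \<longrightarrow> gcd b2 p = 1 \<longrightarrow>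
       (\<Sum>a\<in>{a::int. \<bar>real_of_int a\<bar> < real_of_int q / 2}.
          cmod (fW W (real_of_int (b1 * a) / real_of_int q)) *
          cmod (fW W (real_of_int (b2 * a) / real_of_int p)))
       \<le> c * real_of_int q * real (card W))"
proof (intro exI[of _ 5] conjI allI impI)
  fix q p :: int and W :: "int set" and b1 b2 :: int
  assume "q > 0" "p > 0" and q_lt: "real_of_int q / 2 < real_of_int p" and "p < 2 * q"
    and W: "W \<subseteq> {0..q-1}" and "gcd b1 q = 1" "gcd b2 p = 1"
  let ?A = "{a::int. \<bar>real_of_int a\<bar> < real_of_int q / 2}"
  let ?X = "\<lambda>a. cmod (fW W (real_of_int (b1 * a) / real_of_int q))"
  let ?Y = "\<lambda>a. cmod (fW W (real_of_int (b2 * a) / real_of_int p))"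
  have "q < 2 * p"
    using q_lt by linarith
  have "2 * (\<Sum>a\<in>?A. ?X a * ?Y a) \<le> (\<Sum>a\<in>?A. (?X a)\<^sup>2) + (\<Sum>a\<in>?A. (?Y a)\<^sup>2)"
    by (rule sum_mult_le_sum_squares)
  also have "\<dots> \<le> real 1 * real 1 * of_int q * real (card W)
      + real 2 * real 2 * of_int p * real (card W)"
    using \<open>q > 0\<close> \<open>p > 0\<close> W \<open>q < 2 * p\<close> \<open>gcd b1 q = 1\<close> \<open>gcd b2 p = 1\<close>
    by (intro add_mono sum_norm_fW_squared_centered_le) (auto simp: coprime_iff_gcd_eq_1)
  also have "\<dots> = (of_int q + 4 * of_int p) * real (card W)"
    by (simp add: algebra_simps)
  also have "\<dots> \<le> (10 * of_int q) * real (card W)"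
    using \<open>p < 2 * q\<close> \<open>q > 0\<close> by (intro mult_right_mono) auto
  finally show "(\<Sum>a\<in>?A. ?X a * ?Y a) \<le> 5 * real_of_int q * real (card W)"
    by simp
qed simp

end
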